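(* Let $S$ be a closed, densely defined symmetric operator in a Hilbert space $\mathfrak{H}$ with equal deficiency indices, and let $J$ be a fundamental symmetry in $\mathfrak{H}$ commuting with $S$. Then there exists a unitary mapping $Q:\mathfrak{N}_{i}\to\mathfrak{N}_{-i}$ for which the boundary operators $\Gamma_0,\Gamma_1$ defined below satisfy $\Gamma_0 J=J\Gamma_0$ and $\Gamma_1 J=J\Gamma_1$ on $\mathcal{D}(S^* )$ if and only if there exists at least one self-adjoint extension of $S$ commuting with $J$.
   Context: A fundamental symmetry is a bounded operator $J$ with $J=J^*$, $J^2=I$. "$J$ commutes with an operator $T$" means $J\mathcal{D}(T)\subset\mathcal{D}(T)$ and $JTu=TJu$ for $u\in\mathcal{D}(T)$. Defect subspaces: $\mathfrak{N}_i=\mathfrak{H}\ominus\mathcal{R}(S-iI)$, $\mathfrak{N}_{-i}=\mathfrak{H}\ominus\mathcal{R}(S+iI)$; since $SJ=JS$, these subspaces are invariant under $J$. By von Neumann's formula every $\psi\in\mathcal{D}(S^* )$ decomposes uniquely as $\psi=u+f_{-i}+f_i$ with $u\in\mathcal{D}(S)$, $f_{\pm i}\in\mathfrak{N}_{\pm i}$. For a unitary $Q:\mathfrak{N}_i\to\mathfrak{N}_{-i}$ define $\Gamma_0,\Gamma_1:\mathcal{D}(S^* )\to\mathfrak{N}_{-i}$ by $\Gamma_0\psi=f_{-i}+Qf_i$, $\Gamma_1\psi=if_{-i}-iQf_i$ (the triplet $(\mathfrak{N}_{-i},\Gamma_0,\Gamma_1)$ is then a boundary triplet of $S^*$). *)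

theory Defs
  imports "HOL-Analysis.Analysis" "HOL-Library.Equipollence"
begin

text \<open>A complex Hilbert space is modelled as a real Hilbert space (real inner product,
complete) equipped with a multiplication by the imaginary unit, ii, which is a
real-linear isometry squaring to minus the identity. Complex scalar multiplication
and the complex inner product (linear in the first argument) are derived from it.\<close>

class complex_hilbert = real_inner + complete_space +
  fixes ii :: "'a \<Rightarrow> 'a"
  assumes ii_add: "ii (x + y) = ii x + ii y"
    and ii_scaleR: "ii (r *\<^sub>R x) = r *\<^sub>R ii x"
    and ii_ii: "ii (ii x) = - x"
    and inner_ii_ii: "inner (ii x) (ii y) = inner x y"

definition scaleC :: "complex \<Rightarrow> 'a::complex_hilbert \<Rightarrow> 'a" where
  "scaleC z x = Re z *\<^sub>R x + Im z *\<^sub>R ii x"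

definition cinner :: "'a::complex_hilbert \<Rightarrow> 'a \<Rightarrow> complex" where
  "cinner x y = Complex (inner x y) (inner x (ii y))"

definition orth_compl :: "'a::complex_hilbert set \<Rightarrow> 'a set" where
  "orth_compl M = {x. \<forall>y\<in>M. cinner y x = 0}"

definition cspan :: "'a::complex_hilbert set \<Rightarrow> 'a set" where
  "cspan B = {\<Sum>b\<in>F. scaleC (c b) b | F c. finite F \<and> F \<subseteq> B}"

definition orthonormal_basis :: "'a::complex_hilbert set \<Rightarrow> 'a set \<Rightarrow> bool" where
  "orthonormal_basis M B \<longleftrightarrow> B \<subseteq> M \<and> (\<forall>b\<in>B. cinner b b = 1)
     \<and> (\<forall>b\<in>B. \<forall>c\<in>B. b \<noteq> c \<longrightarrow> cinner b c = 0) \<and> closure (cspan B) = M"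

definition equal_hilbert_dim :: "'a::complex_hilbert set \<Rightarrow> 'a set \<Rightarrow> bool" where
  "equal_hilbert_dim M N \<longleftrightarrow>
     (\<exists>B C. orthonormal_basis M B \<and> orthonormal_basis N C \<and> B \<approx> C)"

definition is_operator :: "('a::complex_hilbert \<times> 'a) set \<Rightarrow> bool" where
  "is_operator G \<longleftrightarrow> (0, 0) \<in> G
     \<and> (\<forall>(u, v)\<in>G. \<forall>(u', v')\<in>G. (u + u', v + v') \<in> G)
     \<and> (\<forall>(u, v)\<in>G. \<forall>c. (scaleC c u, scaleC c v) \<in> G)
     \<and> (\<forall>u v w. (u, v) \<in> G \<and> (u, w) \<in> G \<longrightarrow> v = w)"

definition densely_defined :: "('a::complex_hilbert \<times> 'a) set \<Rightarrow> bool" where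
  "densely_defined G \<longleftrightarrow> closure (Domain G) = UNIV"

definition adjoint_op :: "('a::complex_hilbert \<times> 'a) set \<Rightarrow> ('a \<times> 'a) set" where
  "adjoint_op G = {(y, z). \<forall>(x, w)\<in>G. cinner w y = cinner x z}"

definition symmetric_op :: "('a::complex_hilbert \<times> 'a) set \<Rightarrow> bool" where
  "symmetric_op G \<longleftrightarrow> is_operator G \<and> densely_defined G \<and> G \<subseteq> adjoint_op G"

definition self_adjoint_op :: "('a::complex_hilbert \<times> 'a) set \<Rightarrow> bool" where
  "self_adjoint_op A \<longleftrightarrow> is_operator A \<and> densely_defined A \<and> A = adjoint_op A"

definition range_shift :: "('a::complex_hilbert \<times> 'a) set \<Rightarrow> complex \<Rightarrow> 'a set" where
  "range_shift G c = {v - scaleC c u | u v. (u, v) \<in> G}"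

text \<open>Defect subspace: defect S c = H \<ominus> R(S - c I); so N_i = defect S i, N_{-i} = defect S (-i).\<close>
definition defect :: "('a::complex_hilbert \<times> 'a) set \<Rightarrow> complex \<Rightarrow> 'a set" where
  "defect G c = orth_compl (range_shift G c)"

definition fundamental_symmetry :: "('a::complex_hilbert \<Rightarrow> 'a) \<Rightarrow> bool" where
  "fundamental_symmetry J \<longleftrightarrow> bounded_linear J \<and> (\<forall>x. J (ii x) = ii (J x))
     \<and> (\<forall>x y. cinner (J x) y = cinner x (J y)) \<and> (\<forall>x. J (J x) = x)"

text \<open>J commutes with T: J D(T) \<subseteq> D(T) and J T u = T J u, i.e. J \<times> J maps the graph into itself.\<close>
definition commutes_with :: "('a::complex_hilbert \<Rightarrow> 'a) \<Rightarrow> ('a \<times> 'a) set \<Rightarrow> bool" where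
  "commutes_with J G \<longleftrightarrow> (\<forall>(u, v)\<in>G. (J u, J v) \<in> G)"

definition unitary_between :: "('a::complex_hilbert \<Rightarrow> 'a) \<Rightarrow> 'a set \<Rightarrow> 'a set \<Rightarrow> bool" where
  "unitary_between Q M N \<longleftrightarrow> Q ` M = N
     \<and> (\<forall>x\<in>M. \<forall>y\<in>M. \<forall>a b. Q (scaleC a x + scaleC b y) = scaleC a (Q x) + scaleC b (Q y))
     \<and> (\<forall>x\<in>M. \<forall>y\<in>M. cinner (Q x) (Q y) = cinner x y)"

definition vn_parts :: "('a::complex_hilbert \<times> 'a) set \<Rightarrow> 'a \<Rightarrow> 'a \<times> 'a \<times> 'a" where
  "vn_parts S \<psi> = (THE (u, fm, fp). u \<in> Domain S \<and> fm \<in> defect S (- \<i>)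
       \<and> fp \<in> defect S \<i> \<and> \<psi> = u + fm + fp)"

definition Gamma0 :: "('a::complex_hilbert \<times> 'a) set \<Rightarrow> ('a \<Rightarrow> 'a) \<Rightarrow> 'a \<Rightarrow> 'a" where
  "Gamma0 S Q \<psi> = (case vn_parts S \<psi> of (u, fm, fp) \<Rightarrow> fm + Q fp)"

definition Gamma1 :: "('a::complex_hilbert \<times> 'a) set \<Rightarrow> ('a \<Rightarrow> 'a) \<Rightarrow> 'a \<Rightarrow> 'a" where
  "Gamma1 S Q \<psi> = (case vn_parts S \<psi> of (u, fm, fp) \<Rightarrow> scaleC \<i> fm - scaleC \<i> (Q fp))"

end

theory Submission
  imports Defs
begin

text \<open>By von Neumann's formula every element of D(S*) splits uniquely as u + f_- + f_+ with
u \<in> D(S), f_- \<in> N_{-i} and f_+ \<in> N_i. Self-adjoint extensions of S correspond to unitaries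
Q : N_i \<rightarrow> N_{-i}: the restriction of S* to the kernel of Gamma0 is self-adjoint, and a self-adjoint
A \<supseteq> S arises in this way from the unitary sending f \<in> N_i to the unique g \<in> N_{-i} with
f - g \<in> D(A). Since J commutes with S, it commutes with S* and preserves D(S), N_i and N_{-i},
hence also the von Neumann decomposition. So if Gamma0 commutes with J, then J preserves the kernel
of Gamma0 and the associated extension commutes with J. Conversely, if A commutes with J, the
uniqueness of g shows that the unitary of A commutes with J, and then so do Gamma0 and Gamma1.\<close>

lemma ii_zero [simp]: "ii (0::'a::complex_hilbert) = 0"
  by (metis add_cancel_right_right ii_add)

lemma ii_minus [simp]: "ii (- x) = - ii (x::'a::complex_hilbert)"
  by (metis add.right_inverse add_eq_0_iff ii_add ii_zero)

lemma ii_diff: "ii (x - y) = ii x - ii (y::'a::complex_hilbert)"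
  by (metis diff_conv_add_uminus ii_add ii_minus)

lemma inner_ii_left: "inner (ii x) y = - inner x (ii (y::'a::complex_hilbert))"
  by (metis ii_ii inner_ii_ii inner_minus_left)

lemma norm_ii [simp]: "norm (ii (x::'a::complex_hilbert)) = norm x"
  by (simp add: norm_eq_sqrt_inner inner_ii_ii)

lemma ii_eq_0_iff [simp]: "ii (x::'a::complex_hilbert) = 0 \<longleftrightarrow> x = 0"
  by (metis norm_ii norm_eq_zero)

lemma bounded_linear_ii: "bounded_linear (ii :: 'a::complex_hilbert \<Rightarrow> 'a)"
  by (rule bounded_linear_intro[where K=1]) (auto simp: ii_add ii_scaleR)

lemma scaleC_i: "scaleC \<i> x = ii x"
  by (simp add: scaleC_def)

lemma scaleC_minus_i: "scaleC (- \<i>) x = - ii x"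
  by (simp add: scaleC_def)

lemma scaleC_of_real: "scaleC (complex_of_real r) x = r *\<^sub>R x"
  by (simp add: scaleC_def)

lemma scaleC_one [simp]: "scaleC 1 x = x"
  by (simp add: scaleC_def)

lemma scaleC_minus_one [simp]: "scaleC (- 1) x = - x"
  by (simp add: scaleC_def)

lemma scaleC_zero_left [simp]: "scaleC 0 x = 0"
  by (simp add: scaleC_def)

lemma scaleC_zero_right [simp]: "scaleC c (0::'a::complex_hilbert) = 0"
  by (simp add: scaleC_def)

lemma scaleC_add_right: "scaleC c (x + y) = scaleC c x + scaleC c (y::'a::complex_hilbert)"
  by (simp add: scaleC_def ii_add scaleR_add_right)

lemma scaleC_diff_right: "scaleC c (x - y) = scaleC c x - scaleC c (y::'a::complex_hilbert)"
  by (simp add: scaleC_def ii_diff algebra_simps)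

lemma scaleC_scaleC: "scaleC a (scaleC b x) = scaleC (a * b) (x::'a::complex_hilbert)"
  by (simp add: scaleC_def ii_add ii_scaleR ii_ii algebra_simps)

lemma ii_scaleC: "ii (scaleC c x) = scaleC c (ii (x::'a::complex_hilbert))"
  by (simp add: scaleC_def ii_add ii_scaleR ii_ii)

lemma inner_self_ii [simp]: "inner x (ii (x::'a::complex_hilbert)) = 0"
  by (metis inner_commute inner_ii_left neg_equal_zero)

lemma bounded_linear_scaleC: "bounded_linear (scaleC c :: 'a::complex_hilbert \<Rightarrow> 'a)"
  unfolding scaleC_def
  by (intro bounded_linear_add bounded_linear_scaleR_right bounded_linear_compose[OF _ bounded_linear_ii]
      bounded_linear_ident)

lemma scaleC_eq_0_iff: "scaleC c x = 0 \<longleftrightarrow> c = 0 \<or> x = (0::'a::complex_hilbert)"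
  by (metis scaleC_one scaleC_scaleC scaleC_zero_left scaleC_zero_right field_class.field_inverse)

lemma cinner_eq_0_iff: "cinner x y = 0 \<longleftrightarrow> inner x y = 0 \<and> inner x (ii y) = 0"
  by (simp add: cinner_def complex_eq_iff)

lemma cinner_diff_left: "cinner (x - y) z = cinner x z - cinner y (z::'a::complex_hilbert)"
  by (simp add: cinner_def inner_diff_left complex_eq_iff)

lemma cinner_add_right: "cinner x (y + z) = cinner x y + cinner x (z::'a::complex_hilbert)"
  by (simp add: cinner_def inner_add_right ii_add complex_eq_iff)

lemma cinner_scaleC_left: "cinner (scaleC c x) y = c * cinner x (y::'a::complex_hilbert)"
  by (simp add: cinner_def scaleC_def inner_add_left inner_ii_left ii_ii complex_eq_iff)

lemma cinner_scaleC_right: "cinner x (scaleC c y) = cnj c * cinner x (y::'a::complex_hilbert)"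
  by (simp add: cinner_def scaleC_def inner_add_right inner_diff_right ii_add ii_scaleR ii_ii complex_eq_iff)

section \<open>Orthogonal complements and projections\<close>

lemma orth_compl_zero: "0 \<in> orth_compl M"
  by (simp add: orth_compl_def cinner_def complex_eq_iff)

lemma orth_compl_add: "x \<in> orth_compl M \<Longrightarrow> y \<in> orth_compl M \<Longrightarrow> x + y \<in> orth_compl M"
  by (simp add: orth_compl_def cinner_add_right)

lemma orth_compl_scaleC: "x \<in> orth_compl M \<Longrightarrow> scaleC c x \<in> orth_compl M"
  by (simp add: orth_compl_def cinner_scaleC_right)

lemma orth_compl_diff: "x \<in> orth_compl M \<Longrightarrow> y \<in> orth_compl M \<Longrightarrow> x - y \<in> orth_compl M"
  using orth_compl_add[OF _ orth_compl_scaleC, of x M y "-1"] by simp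

lemma orth_compl_ii: "x \<in> orth_compl M \<Longrightarrow> ii x \<in> orth_compl M"
  using orth_compl_scaleC[of x M \<i>] by (simp add: scaleC_i)

lemma orth_compl_scaleR: "x \<in> orth_compl M \<Longrightarrow> r *\<^sub>R x \<in> orth_compl M"
  using orth_compl_scaleC[of x M "complex_of_real r"] by (simp add: scaleC_of_real)

lemma orth_compl_sum_eq_0:
  assumes "r \<in> M" "f \<in> orth_compl M" "r + f = 0"
  shows "r = 0" "f = 0"
proof -
  have "inner r f = 0"
    using assms(1,2) by (auto simp: orth_compl_def cinner_eq_0_iff)
  moreover have "f = - r"
    using assms(3) by (simp add: eq_neg_iff_add_eq_0 add.commute)
  ultimately show "r = 0" "f = 0"
    by simp_all
qed

lemma parallelogram_law:
  fixes x y :: "'a::real_inner"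
  shows "norm (x + y)^2 + norm (x - y)^2 = 2 * norm x^2 + 2 * norm y^2"
  by (simp add: power2_norm_eq_inner inner_add_left inner_add_right inner_diff_left inner_diff_right
      inner_commute)

lemma convex_infdist_parallelogram:
  fixes M :: "'a::real_inner set"
  assumes "convex M" "a \<in> M" "b \<in> M"
  shows "norm (a - b)^2 \<le> 2 * dist x a ^2 + 2 * dist x b ^2 - 4 * infdist x M ^2"
proof -
  have "(1/2) *\<^sub>R a + (1/2) *\<^sub>R b \<in> M"
    using assms by (intro convexD) auto
  then have "2 * infdist x M \<le> 2 * norm (x - ((1/2) *\<^sub>R a + (1/2) *\<^sub>R b))"
    by (simp add: infdist_le flip: dist_norm)
  also have "\<dots> = norm (2 *\<^sub>R (x - ((1/2) *\<^sub>R a + (1/2) *\<^sub>R b)))"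
    by simp
  also have "2 *\<^sub>R (x - ((1/2) *\<^sub>R a + (1/2) *\<^sub>R b)) = (x - a) + (x - b)"
    by (simp add: algebra_simps scaleR_2)
  finally have "(2 * infdist x M)^2 \<le> norm ((x - a) + (x - b))^2"
    by (intro power_mono) (simp_all add: infdist_nonneg)
  moreover have "norm ((x - a) + (x - b))^2 + norm (a - b)^2 = 2 * dist x a ^2 + 2 * dist x b ^2"
    using parallelogram_law[of "x - a" "x - b"] by (simp add: dist_norm norm_minus_commute)
  ultimately show ?thesis
    by (simp add: power_mult_distrib)
qed

lemma convex_minimizing_sequence_Cauchy:
  fixes M :: "'a::real_inner set"
  assumes "convex M" and mM: "\<And>n. m n \<in> M"
    and m: "\<And>n. dist x (m n) ^2 < infdist x M ^2 + inverse (Suc n)"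
  shows "Cauchy m"
proof (rule CauchyI)
  fix e :: real
  assume "0 < e"
  then obtain N where N: "inverse (Suc N) < e^2 / 4"
    using reals_Archimedean by (metis zero_less_divide_iff zero_less_numeral zero_less_power)
  have "norm (m p - m q) < e" if "N \<le> p" "N \<le> q" for p q
  proof -
    have "inverse (Suc p) \<le> inverse (Suc N)" "inverse (Suc q) \<le> inverse (Suc N)"
      using that by (simp_all add: field_simps)
    then have "norm (m p - m q)^2 < e^2"
      using convex_infdist_parallelogram[OF assms(1) mM mM, of p q x] m[of p] m[of q] N by linarith
    then show ?thesis
      using \<open>0 < e\<close> by (simp add: power_less_imp_less_base)
  qed
  then show "\<exists>N. \<forall>p\<ge>N. \<forall>q\<ge>N. norm (m p - m q) < e"
    by blast
qed

lemma closed_convex_nearest_point: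
  fixes M :: "'a::{real_inner, complete_space} set"
  assumes "closed M" "convex M" "M \<noteq> {}"
  obtains m where "m \<in> M" "\<And>y. y \<in> M \<Longrightarrow> dist x m \<le> dist x y"
proof -
  define d where "d = infdist x M"
  have "\<exists>a\<in>M. dist x a ^2 < d^2 + inverse (Suc n)" for n
  proof -
    have "d < sqrt (d^2 + inverse (Suc n))"
      by (simp add: d_def infdist_nonneg real_less_rsqrt)
    then obtain a where "a \<in> M" "dist x a < sqrt (d^2 + inverse (Suc n))"
      using cINF_less_iff[of M "dist x"] assms(3)
      by (auto simp: d_def infdist_notempty intro: bdd_belowI2[of _ 0])
    then show ?thesis
      by (metis real_sqrt_less_iff real_sqrt_unique zero_le_dist)
  qed
  then obtain m where mM: "\<And>n. m n \<in> M" and m: "\<And>n. dist x (m n) ^2 < d^2 + inverse (Suc n)"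
    by metis
  then have "Cauchy m"
    using convex_minimizing_sequence_Cauchy[OF assms(2)] unfolding d_def by blast
  then obtain m0 where lim: "m \<longlonglongrightarrow> m0"
    using Cauchy_convergent_iff convergent_def by blast
  have "m0 \<in> M"
    using closed_sequentially[OF assms(1) _ lim] mM by blast
  moreover have "dist x m0 ^2 \<le> d^2"
  proof (rule LIMSEQ_le)
    show "(\<lambda>n. dist x (m n) ^2) \<longlonglongrightarrow> dist x m0 ^2"
      by (intro tendsto_intros lim)
    show "(\<lambda>n. d^2 + inverse (Suc n)) \<longlonglongrightarrow> d^2"
      using tendsto_add[OF tendsto_const LIMSEQ_inverse_real_of_nat, of "d^2"] by simp
  qed (use m less_imp_le in blast)
  then have "dist x m0 \<le> d"
    by (simp add: d_def infdist_nonneg power2_le_iff_abs_le)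
  ultimately show ?thesis
    using that infdist_le[of _ M x] unfolding d_def by fastforce
qed

lemma subspace_nearest_point_orthogonal:
  fixes M :: "'a::real_inner set"
  assumes "subspace M" "m \<in> M" "\<And>y. y \<in> M \<Longrightarrow> dist x m \<le> dist x y" "y \<in> M"
  shows "inner (x - m) y = 0"
proof (cases "y = 0")
  case False
  define c where "c = inner (x - m) y"
  define t where "t = c / norm y ^2"
  have "m + t *\<^sub>R y \<in> M"
    using assms by (simp add: subspace_add subspace_scale)
  then have "norm (x - m)^2 \<le> norm ((x - m) - t *\<^sub>R y)^2"
    using assms(3) by (simp add: dist_norm power_mono algebra_simps)
  also have "\<dots> = norm (x - m)^2 - c^2 / norm y ^2"
    using False by (simp add: t_def c_def power2_norm_eq_inner inner_diff_left inner_diff_right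
        inner_commute) (simp add: field_simps power2_eq_square flip: power2_norm_eq_inner)
  finally show ?thesis
    using False by (simp add: c_def divide_le_0_iff)
qed simp

lemma orth_compl_iff_inner:
  assumes "\<And>r. r \<in> M \<Longrightarrow> ii r \<in> M"
  shows "x \<in> orth_compl M \<longleftrightarrow> (\<forall>r\<in>M. inner r x = 0)"
proof -
  have "inner r (ii x) = 0" if "r \<in> M" "\<forall>r\<in>M. inner r x = 0" for r
    using that assms[of r] inner_ii_left[of r x] by simp
  then show ?thesis
    unfolding orth_compl_def cinner_eq_0_iff by blast
qed

lemma orth_compl_decomposition:
  assumes "closed M" "subspace M" "\<And>r. r \<in> M \<Longrightarrow> ii r \<in> M"
  obtains m where "m \<in> M" "x - m \<in> orth_compl M"
proof -
  obtain m where "m \<in> M" "\<And>y. y \<in> M \<Longrightarrow> dist x m \<le> dist x y"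
    using closed_convex_nearest_point[OF assms(1) subspace_imp_convex[OF assms(2)]]
      subspace_0[OF assms(2)] by blast
  then show ?thesis
    using that subspace_nearest_point_orthogonal[OF assms(2)]
    by (simp add: orth_compl_iff_inner[OF assms(3)] inner_commute)
qed

lemma operator_zero: "is_operator T \<Longrightarrow> (0, 0) \<in> T"
  by (simp add: is_operator_def)

lemma operator_add: "is_operator T \<Longrightarrow> (u, v) \<in> T \<Longrightarrow> (u', v') \<in> T \<Longrightarrow> (u + u', v + v') \<in> T"
  unfolding is_operator_def by fast

lemma operator_scaleC: "is_operator T \<Longrightarrow> (u, v) \<in> T \<Longrightarrow> (scaleC c u, scaleC c v) \<in> T"
  unfolding is_operator_def by fast

lemma operator_single_valued: "is_operator T \<Longrightarrow> (u, v) \<in> T \<Longrightarrow> (u, w) \<in> T \<Longrightarrow> v = w"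
  unfolding is_operator_def by fast

lemma operator_ii: "is_operator T \<Longrightarrow> (u, v) \<in> T \<Longrightarrow> (ii u, ii v) \<in> T"
  using operator_scaleC[of T u v \<i>] by (simp add: scaleC_i)

lemma operator_scaleR: "is_operator T \<Longrightarrow> (u, v) \<in> T \<Longrightarrow> (r *\<^sub>R u, r *\<^sub>R v) \<in> T"
  using operator_scaleC[of T u v "complex_of_real r"] by (simp add: scaleC_of_real)

lemma operator_diff: "is_operator T \<Longrightarrow> (u, v) \<in> T \<Longrightarrow> (u', v') \<in> T \<Longrightarrow> (u - u', v - v') \<in> T"
  using operator_add[OF _ _ operator_scaleR, of T u v u' v' "-1"] by simp

lemma subspace_operator: "is_operator T \<Longrightarrow> subspace T"
  using operator_zero[of T] by (auto simp: subspace_def zero_prod_def operator_add operator_scaleR)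

lemma adjoint_op_iff_inner:
  assumes "is_operator T"
  shows "(y, z) \<in> adjoint_op T \<longleftrightarrow> (\<forall>(x, w)\<in>T. inner w y = inner x z)"
proof
  show "\<forall>(x, w)\<in>T. inner w y = inner x z" if "(y, z) \<in> adjoint_op T"
    using that by (auto simp: adjoint_op_def cinner_def)
next
  assume real: "\<forall>(x, w)\<in>T. inner w y = inner x z"
  have "cinner w y = cinner x z" if "(x, w) \<in> T" for x w
  proof -
    have "inner (ii w) y = inner (ii x) z"
      using real operator_ii[OF assms that] by fast
    then show ?thesis
      using real that by (auto simp: cinner_def inner_ii_left)
  qed
  then show "(y, z) \<in> adjoint_op T"
    by (auto simp: adjoint_op_def)
qed

lemma adjoint_opD: "is_operator T \<Longrightarrow> (y, z) \<in> adjoint_op T \<Longrightarrow> (x, w) \<in> T \<Longrightarrow> inner w y = inner x z"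
  using adjoint_op_iff_inner by fast

lemma adjoint_op_antimono: "T \<subseteq> T' \<Longrightarrow> adjoint_op T' \<subseteq> adjoint_op T"
  unfolding adjoint_op_def by auto

lemma is_operator_adjoint_op:
  assumes op: "is_operator T" and dense: "densely_defined T"
  shows "is_operator (adjoint_op T)"
proof -
  have add: "(y + y', z + z') \<in> adjoint_op T" if "(y, z) \<in> adjoint_op T" "(y', z') \<in> adjoint_op T" for y z y' z'
    using that by (fastforce simp: adjoint_op_def cinner_add_right)
  have scale: "(scaleC c y, scaleC c z) \<in> adjoint_op T" if "(y, z) \<in> adjoint_op T" for y z c
    using that by (fastforce simp: adjoint_op_def cinner_scaleC_right)
  have "z = z'" if "(y, z) \<in> adjoint_op T" "(y, z') \<in> adjoint_op T" for y z z'
  proof -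
    have "(0, z - z') \<in> adjoint_op T"
      using add[OF that(1) scale[OF that(2), of "-1"]] by simp
    then have "Domain T \<subseteq> {x. inner x (z - z') = 0}"
      using adjoint_opD[OF op] by fastforce
    moreover have "closed {x. inner x (z - z') = 0}"
      by (intro closed_Collect_eq continuous_intros)
    ultimately have "closure (Domain T) \<subseteq> {x. inner x (z - z') = 0}"
      by (rule closure_minimal)
    then have "z - z' \<in> {x. inner x (z - z') = 0}"
      using dense by (metis UNIV_I densely_defined_def subsetD)
    then show ?thesis
      by simp
  qed
  moreover have "(0, 0) \<in> adjoint_op T"
    by (simp add: adjoint_op_iff_inner[OF op])
  ultimately show ?thesis
    using add scale unfolding is_operator_def by blast
qed

lemma closed_adjoint_op:
  assumes "is_operator T"
  shows "closed (adjoint_op T)"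
proof -
  have "adjoint_op T = (\<Inter>q\<in>T. {p. inner (snd q) (fst p) = inner (fst q) (snd p)})"
    by (fastforce simp: adjoint_op_iff_inner[OF assms])
  then show ?thesis
    by (simp add: closed_INT closed_Collect_eq continuous_on_inner continuous_on_fst continuous_on_snd)
qed

lemma fundamental_symmetry_linear: "fundamental_symmetry J \<Longrightarrow> linear J"
  by (simp add: fundamental_symmetry_def bounded_linear.linear)

lemma fundamental_symmetry_scaleC:
  assumes "fundamental_symmetry J"
  shows "J (scaleC c x) = scaleC c (J x)"
  using assms linear_add[OF fundamental_symmetry_linear[OF assms]]
    linear_scale[OF fundamental_symmetry_linear[OF assms]]
  by (simp add: scaleC_def fundamental_symmetry_def)

lemma commutes_with_Domain: "commutes_with J T \<Longrightarrow> u \<in> Domain T \<Longrightarrow> J u \<in> Domain T"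
  by (auto simp: commutes_with_def)

lemma commutes_with_adjoint_op:
  assumes J: "fundamental_symmetry J" and "commutes_with J T"
  shows "commutes_with J (adjoint_op T)"
proof -
  have "(J y, J z) \<in> adjoint_op T" if "(y, z) \<in> adjoint_op T" for y z
  proof -
    have "cinner (J w) y = cinner (J x) z" if "(x, w) \<in> T" for x w
      using assms that \<open>(y, z) \<in> adjoint_op T\<close> by (auto simp: commutes_with_def adjoint_op_def)
    then show ?thesis
      using J by (auto simp: adjoint_op_def fundamental_symmetry_def)
  qed
  then show ?thesis
    by (auto simp: commutes_with_def)
qed

section \<open>Symmetric operators and their defect subspaces\<close>

lemma symmetric_inner_ii:
  assumes op: "is_operator T" and sym: "T \<subseteq> adjoint_op T" and uv: "(u, v) \<in> T"
  shows "inner v (ii u) = 0"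
proof -
  have "inner (ii v) u = inner (ii u) v"
    using adjoint_opD[OF op _ operator_ii[OF op uv]] sym uv by blast
  moreover have "inner u (ii v) = - inner v (ii u)"
    by (metis inner_commute inner_ii_left)
  ultimately show ?thesis
    by (simp add: inner_ii_left)
qed

lemma symmetric_norm_range_shift:
  assumes "is_operator T" "T \<subseteq> adjoint_op T" "(u, v) \<in> T" "c \<in> {\<i>, - \<i>}"
  shows "norm (v - scaleC c u)^2 = norm v^2 + norm u^2"
proof -
  have "norm (v + s *\<^sub>R ii u)^2 = inner v v + 2 * s * inner v (ii u) + s^2 * inner u u" for s
    unfolding power2_norm_eq_inner
    by (simp add: inner_commute inner_ii_ii algebra_simps power2_eq_square)
  from this[of 1] this[of "-1"] show ?thesis
    using assms symmetric_inner_ii[OF assms(1-3)] by (auto simp: scaleC_i scaleC_minus_i power2_norm_eq_inner)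
qed

lemma symmetric_nonreal_eigenvector_eq_0:
  assumes "is_operator T" "T \<subseteq> adjoint_op T" "(f, scaleC c f) \<in> T" "Im c \<noteq> 0"
  shows "f = 0"
proof -
  have "inner (scaleC c f) (ii f) = Im c * inner f f"
    by (simp add: scaleC_def inner_add_left inner_ii_ii)
  then show ?thesis
    using symmetric_inner_ii[OF assms(1-3)] assms(4) by simp
qed

lemma range_shift_eq_image: "range_shift T c = (\<lambda>(u, v). v - scaleC c u) ` T"
  by (auto simp: range_shift_def)

lemma bounded_linear_range_shift_map: "bounded_linear (\<lambda>(u, v). v - scaleC c u)"
  unfolding case_prod_beta
  by (intro bounded_linear_sub bounded_linear_snd bounded_linear_compose[OF bounded_linear_scaleC]
      bounded_linear_fst)

lemma subspace_range_shift: "is_operator T \<Longrightarrow> subspace (range_shift T c)"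
  unfolding range_shift_eq_image
  by (intro linear_subspace_image bounded_linear.linear[OF bounded_linear_range_shift_map]
      subspace_operator)

lemma closed_range_shift:
  assumes op: "is_operator T" and sym: "T \<subseteq> adjoint_op T" and "closed T" and c: "c \<in> {\<i>, - \<i>}"
  shows "closed (range_shift T c)"
proof -
  have "norm ((\<lambda>(u, v). v - scaleC c u) p) = norm p" if "p \<in> T" for p
    using symmetric_norm_range_shift[OF op sym _ c, of "fst p" "snd p"] that
    by (cases p) (simp add: norm_prod_def add.commute real_sqrt_unique)
  then have "complete ((\<lambda>(u, v). v - scaleC c u) ` T)"
    using \<open>closed T\<close>
    by (intro complete_isometric_image[OF zero_less_one subspace_operator[OF op]
          bounded_linear_range_shift_map]) (auto simp: complete_eq_closed)
  then show ?thesis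
    by (simp add: range_shift_eq_image complete_eq_closed)
qed

lemma range_shift_ii: "is_operator T \<Longrightarrow> r \<in> range_shift T c \<Longrightarrow> ii r \<in> range_shift T c"
  unfolding range_shift_def by (force simp: ii_diff ii_scaleC dest: operator_ii)

lemma defect_iff_adjoint: "f \<in> defect T c \<longleftrightarrow> (f, scaleC (cnj c) f) \<in> adjoint_op T"
proof -
  have "cinner (v - scaleC c u) f = 0 \<longleftrightarrow> cinner v f = cinner u (scaleC (cnj c) f)" for u v
    by (simp add: cinner_diff_left cinner_scaleC_left cinner_scaleC_right)
  then show ?thesis
    unfolding defect_def orth_compl_def range_shift_def adjoint_op_def by blast
qed

lemma defect_zero: "0 \<in> defect T c"
  unfolding defect_def by (rule orth_compl_zero)

lemma defect_add: "f \<in> defect T c \<Longrightarrow> g \<in> defect T c \<Longrightarrow> f + g \<in> defect T c"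
  unfolding defect_def by (rule orth_compl_add)

lemma defect_diff: "f \<in> defect T c \<Longrightarrow> g \<in> defect T c \<Longrightarrow> f - g \<in> defect T c"
  unfolding defect_def by (rule orth_compl_diff)

lemma defect_minus: "f \<in> defect T c \<Longrightarrow> - f \<in> defect T c"
  using orth_compl_scaleC[of f _ "- 1"] by (simp add: defect_def)

lemma defect_scaleC: "f \<in> defect T c \<Longrightarrow> scaleC a f \<in> defect T c"
  unfolding defect_def by (rule orth_compl_scaleC)

lemma defect_scaleR: "f \<in> defect T c \<Longrightarrow> r *\<^sub>R f \<in> defect T c"
  unfolding defect_def by (rule orth_compl_scaleR)

lemma defect_ii: "f \<in> defect T c \<Longrightarrow> ii f \<in> defect T c"
  unfolding defect_def by (rule orth_compl_ii)

lemma commutes_with_defect: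
  assumes "fundamental_symmetry J" "commutes_with J T" "f \<in> defect T c"
  shows "J f \<in> defect T c"
  using commutes_with_adjoint_op[OF assms(1,2)] assms(3)
  by (auto simp: defect_iff_adjoint commutes_with_def fundamental_symmetry_scaleC[OF assms(1)])

lemma range_shift_defect_decomposition:
  assumes "is_operator T" "T \<subseteq> adjoint_op T" "closed T" "c \<in> {\<i>, - \<i>}"
  obtains r where "r \<in> range_shift T c" "y - r \<in> defect T c"
  using orth_compl_decomposition[OF closed_range_shift[OF assms] subspace_range_shift[OF assms(1)]
      range_shift_ii[OF assms(1)]]
  unfolding defect_def by blast

lemma range_shift_mem: "(u, v) \<in> T \<Longrightarrow> v - scaleC c u \<in> range_shift T c"
  unfolding range_shift_def by blast

lemma symmetric_range_shift_defect_eq_0: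
  assumes op: "is_operator T" and sym: "T \<subseteq> adjoint_op T" and c: "c \<in> {\<i>, - \<i>}"
    and uv: "(u, v) \<in> T" and f: "f \<in> defect T c" and sum: "(v - scaleC c u) + f = 0"
  shows "u = 0" "f = 0"
proof -
  have "v - scaleC c u = 0" "f = 0"
    using orth_compl_sum_eq_0[OF range_shift_mem[OF uv] _ sum] f by (simp_all add: defect_def)
  then show "u = 0" "f = 0"
    using symmetric_norm_range_shift[OF op sym uv c] by (simp_all add: add_nonneg_eq_0_iff)
qed

lemma self_adjoint_range_shift:
  assumes sa: "self_adjoint_op A" and c: "c \<in> {\<i>, - \<i>}"
  shows "range_shift A c = UNIV"
proof -
  have op: "is_operator A" and eq: "A = adjoint_op A"
    using sa by (simp_all add: self_adjoint_op_def)
  have "y \<in> range_shift A c" for y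
  proof -
    obtain r where r: "r \<in> range_shift A c" "y - r \<in> defect A c"
      using range_shift_defect_decomposition[OF op _ _ c] eq closed_adjoint_op[OF op]
      by (metis order_refl)
    then have "(y - r, scaleC (cnj c) (y - r)) \<in> A"
      using eq defect_iff_adjoint by blast
    moreover have "Im (cnj c) \<noteq> 0"
      using c by auto
    ultimately have "y - r = 0"
      using symmetric_nonreal_eigenvector_eq_0[OF op] eq by blast
    then show ?thesis
      using r by simp
  qed
  then show ?thesis
    by blast
qed

section \<open>The von Neumann decomposition\<close>

locale closed_symmetric =
  fixes S :: "('a::complex_hilbert \<times> 'a) set"
  assumes op: "is_operator S" and closed_graph: "closed S" and dense: "densely_defined S"
    and sym: "S \<subseteq> adjoint_op S"
begin

abbreviation "Ni \<equiv> defect S \<i>"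
abbreviation "Nmi \<equiv> defect S (- \<i>)"

lemma op_adjoint: "is_operator (adjoint_op S)"
  using is_operator_adjoint_op[OF op dense] .

lemma Ni_iff: "f \<in> Ni \<longleftrightarrow> (f, - ii f) \<in> adjoint_op S"
  by (simp add: defect_iff_adjoint scaleC_minus_i)

lemma Nmi_iff: "f \<in> Nmi \<longleftrightarrow> (f, ii f) \<in> adjoint_op S"
  by (simp add: defect_iff_adjoint scaleC_i)

lemma adjoint_decomposed:
  assumes "(u, w) \<in> S" "fm \<in> Nmi" "fp \<in> Ni"
  shows "(u + fm + fp, w + ii fm - ii fp) \<in> adjoint_op S"
  using operator_add[OF op_adjoint operator_add[OF op_adjoint, of u w fm "ii fm"], of fp "- ii fp"]
    assms sym Nmi_iff Ni_iff by auto

lemma von_neumann_decomposition_exists: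
  assumes "\<psi> \<in> Domain (adjoint_op S)"
  obtains u fm fp where "u \<in> Domain S" "fm \<in> Nmi" "fp \<in> Ni" "\<psi> = u + fm + fp"
proof -
  obtain \<phi> where \<psi>\<phi>: "(\<psi>, \<phi>) \<in> adjoint_op S"
    using assms by auto
  obtain r where r: "r \<in> range_shift S \<i>" and n: "(\<phi> - ii \<psi>) - r \<in> Ni"
    using range_shift_defect_decomposition[OF op sym closed_graph, of \<i>] by auto
  obtain u v where uv: "(u, v) \<in> S" and r_eq: "r = v - ii u"
    using r by (auto simp: range_shift_def scaleC_i)
  \<comment> \<open>\<open>\<phi> - i\<psi>\<close> minus its projection onto R(S - i) is a defect vector n; take \<open>fp = i n / 2\<close>.\<close>
  define fp where "fp = (1/2) *\<^sub>R ii ((\<phi> - ii \<psi>) - r)"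
  have fp: "fp \<in> Ni"
    unfolding fp_def by (intro defect_scaleR defect_ii n)
  have "(\<psi> - u - fp, \<phi> - v + ii fp) \<in> adjoint_op S"
    using operator_diff[OF op_adjoint operator_diff[OF op_adjoint \<psi>\<phi>, of u v], of fp "- ii fp"]
      sym uv fp Ni_iff by auto
  moreover have "\<phi> - v + ii fp = ii (\<psi> - u - fp)"
  proof -
    have "2 *\<^sub>R ii fp = - ((\<phi> - ii \<psi>) - r)"
      unfolding fp_def by (simp add: ii_scaleR ii_ii)
    moreover have "ii (\<psi> - u - fp) - (\<phi> - v + ii fp) = - (((\<phi> - ii \<psi>) - r) + 2 *\<^sub>R ii fp)"
      unfolding r_eq by (simp add: ii_diff ii_add algebra_simps scaleR_2)
    ultimately show ?thesis
      by simp
  qed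
  ultimately have "\<psi> - u - fp \<in> Nmi"
    by (simp add: Nmi_iff)
  moreover have "u \<in> Domain S"
    using uv by blast
  ultimately show ?thesis
    using that[of u "\<psi> - u - fp" fp] fp by simp
qed

lemma von_neumann_decomposition_zero:
  assumes u: "u \<in> Domain S" and fm: "fm \<in> Nmi" and fp: "fp \<in> Ni" and sum: "u + fm + fp = 0"
  shows "u = 0" "fm = 0" "fp = 0"
proof -
  obtain w where uw: "(u, w) \<in> S"
    using u by auto
  have "(0, w + ii fm - ii fp) \<in> adjoint_op S"
    using adjoint_decomposed[OF uw fm fp] sum by simp
  then have "w + ii fm - ii fp = 0"
    using operator_zero[OF op_adjoint] operator_single_valued[OF op_adjoint] by blast
  moreover have "ii u + ii fm + ii fp = 0"
    using arg_cong[OF sum, of ii] by (simp add: ii_add)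
  moreover have "(w - scaleC \<i> u) + (- 2) *\<^sub>R ii fp = (w + ii fm - ii fp) - (ii u + ii fm + ii fp)"
    by (simp add: scaleC_i algebra_simps scaleR_2)
  ultimately have "(w - scaleC \<i> u) + (- 2) *\<^sub>R ii fp = 0"
    by simp
  then have "u = 0" "(- 2) *\<^sub>R ii fp = 0"
    using symmetric_range_shift_defect_eq_0[OF op sym insertI1 uw defect_scaleR[OF defect_ii[OF fp]]]
    by blast+
  then show "u = 0" "fm = 0" "fp = 0"
    using sum by auto
qed

lemma von_neumann_decomposition_unique:
  assumes "u \<in> Domain S" "fm \<in> Nmi" "fp \<in> Ni" "\<psi> = u + fm + fp"
  shows "vn_parts S \<psi> = (u, fm, fp)"
  unfolding vn_parts_def
proof (rule the_equality)
  fix p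
  assume "case p of (u', fm', fp') \<Rightarrow> u' \<in> Domain S \<and> fm' \<in> Nmi \<and> fp' \<in> Ni \<and> \<psi> = u' + fm' + fp'"
  then obtain u' fm' fp' where p: "p = (u', fm', fp')" and parts: "u' \<in> Domain S" "fm' \<in> Nmi" "fp' \<in> Ni"
    "\<psi> = u' + fm' + fp'"
    by (cases p) auto
  have "u' - u \<in> Domain S"
    using operator_diff[OF op] parts(1) assms(1) by blast
  moreover have "(u' - u) + (fm' - fm) + (fp' - fp) = 0"
    using parts(4) assms(4) by (simp add: algebra_simps)
  ultimately have "u' - u = 0" "fm' - fm = 0" "fp' - fp = 0"
    using von_neumann_decomposition_zero[OF _ defect_diff[OF parts(2) assms(2)]
        defect_diff[OF parts(3) assms(3)]] by blast+
  then show "p = (u, fm, fp)"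
    by (simp add: p)
qed (use assms in simp)

lemma adjoint_decomposition:
  assumes "(x, z) \<in> adjoint_op S"
  obtains u w fm fp where "(u, w) \<in> S" "fm \<in> Nmi" "fp \<in> Ni" "x = u + fm + fp"
    "z = w + ii fm - ii fp"
proof -
  obtain u fm fp where parts: "u \<in> Domain S" "fm \<in> Nmi" "fp \<in> Ni" "x = u + fm + fp"
    using von_neumann_decomposition_exists assms by blast
  then obtain w where uw: "(u, w) \<in> S"
    by blast
  have "z = w + ii fm - ii fp"
    using operator_single_valued[OF op_adjoint assms] adjoint_decomposed[OF uw parts(2,3)] parts(4)
    by simp
  with that uw parts show ?thesis
    by blast
qed

lemma adjoint_decomposition_defects:
  assumes c: "c \<in> {\<i>, - \<i>}" and xz: "(x, z) \<in> adjoint_op S"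
  obtains u w h k where "(u, w) \<in> S" "h \<in> defect S c" "k \<in> defect S (- c)" "x = u + h + k"
    "z = w - scaleC c h + scaleC c k"
proof -
  obtain u w fm fp where parts: "(u, w) \<in> S" "fm \<in> Nmi" "fp \<in> Ni" "x = u + fm + fp"
    "z = w + ii fm - ii fp"
    using adjoint_decomposition[OF xz] .
  show ?thesis
  proof (cases "c = \<i>")
    case True
    then show ?thesis
      using that[of u w fp fm] parts by (simp add: scaleC_i algebra_simps)
  next
    case False
    then show ?thesis
      using that[of u w fm fp] parts c by (simp add: scaleC_minus_i algebra_simps)
  qed
qed

lemma boundary_form:
  assumes uw: "(u, w) \<in> S" and uw': "(u', w') \<in> S" and a: "a \<in> Nmi" and a': "a' \<in> Nmi"
    and b: "b \<in> Ni" and b': "b' \<in> Ni"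
  shows "inner (w + ii a - ii b) (u' + a' + b') - inner (u + a + b) (w' + ii a' - ii b')
    = 2 * (inner (ii a) a' - inner (ii b) b')"
proof -
  have "inner w a' = inner u (ii a')" "inner w' a = inner u' (ii a)"
    using adjoint_opD[OF op] a a' uw uw' Nmi_iff by blast+
  moreover have "inner w b' = - inner u (ii b')" "inner w' b = - inner u' (ii b)"
    using adjoint_opD[OF op] b b' uw uw' Ni_iff by fastforce+
  moreover have "inner w u' = inner u w'"
    using adjoint_opD[OF op _ uw] uw' sym by blast
  moreover have "inner a (ii b') = - inner (ii a) b'" "inner b (ii a') = - inner (ii b) a'"
    "inner a (ii a') = - inner (ii a) a'" "inner b (ii b') = - inner (ii b) b'"
    by (simp_all add: inner_ii_left)
  ultimately show ?thesis
    by (simp add: inner_commute inner_ii_left algebra_simps)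
qed

lemma Gamma0_eq: "u \<in> Domain S \<Longrightarrow> fm \<in> Nmi \<Longrightarrow> fp \<in> Ni \<Longrightarrow> Gamma0 S Q (u + fm + fp) = fm + Q fp"
  by (simp add: Gamma0_def von_neumann_decomposition_unique)

lemma Gamma1_eq:
  "u \<in> Domain S \<Longrightarrow> fm \<in> Nmi \<Longrightarrow> fp \<in> Ni \<Longrightarrow> Gamma1 S Q (u + fm + fp) = ii fm - ii (Q fp)"
  by (simp add: Gamma1_def von_neumann_decomposition_unique scaleC_i)

end

section \<open>The self-adjoint extension determined by a unitary\<close>

definition Gamma0_extension :: "('a::complex_hilbert \<times> 'a) set \<Rightarrow> ('a \<Rightarrow> 'a) \<Rightarrow> ('a \<times> 'a) set"
  where "Gamma0_extension S Q = {(x, z) \<in> adjoint_op S. Gamma0 S Q x = 0}"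

locale closed_symmetric_unitary = closed_symmetric S for S :: "('a::complex_hilbert \<times> 'a) set" +
  fixes Q :: "'a \<Rightarrow> 'a"
  assumes unitary: "unitary_between Q Ni Nmi"
begin

abbreviation "AQ \<equiv> Gamma0_extension S Q"

lemma Q_image: "Q ` Ni = Nmi"
  using unitary by (simp add: unitary_between_def)

lemma Q_mem: "f \<in> Ni \<Longrightarrow> Q f \<in> Nmi"
  using Q_image by blast

lemma Q_linear: "x \<in> Ni \<Longrightarrow> y \<in> Ni \<Longrightarrow> Q (scaleC a x + scaleC b y) = scaleC a (Q x) + scaleC b (Q y)"
  using unitary by (simp add: unitary_between_def)

lemma Q_add: "x \<in> Ni \<Longrightarrow> y \<in> Ni \<Longrightarrow> Q (x + y) = Q x + Q y"
  using Q_linear[of x y 1 1] by simp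

lemma Q_scaleC: "x \<in> Ni \<Longrightarrow> Q (scaleC a x) = scaleC a (Q x)"
  using Q_linear[of x x a 0] by simp

lemma Q_ii: "x \<in> Ni \<Longrightarrow> Q (ii x) = ii (Q x)"
  using Q_scaleC[of x \<i>] by (simp add: scaleC_i)

lemma Q_zero: "Q 0 = 0"
  using Q_scaleC[OF defect_zero, of 0] by simp

lemma Q_inner: "x \<in> Ni \<Longrightarrow> y \<in> Ni \<Longrightarrow> inner (Q x) (Q y) = inner x y"
  using unitary by (simp add: unitary_between_def cinner_def complex_eq_iff)

lemma AQ_mem:
  assumes "(u, w) \<in> S" "f \<in> Ni"
  shows "(u - Q f + f, w - ii (Q f) - ii f) \<in> AQ"
proof -
  have "- Q f \<in> Nmi"
    using defect_minus[OF Q_mem[OF assms(2)]] .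
  with assms show ?thesis
    using adjoint_decomposed[of u w "- Q f" f] Gamma0_eq[of u "- Q f" f Q]
    by (force simp: Gamma0_extension_def)
qed

lemma AQ_cases:
  assumes "(x, z) \<in> AQ"
  obtains u w f where "(u, w) \<in> S" "f \<in> Ni" "x = u - Q f + f" "z = w - ii (Q f) - ii f"
proof -
  have xz: "(x, z) \<in> adjoint_op S" and "Gamma0 S Q x = 0"
    using assms by (auto simp: Gamma0_extension_def)
  obtain u w fm fp where parts: "(u, w) \<in> S" "fm \<in> Nmi" "fp \<in> Ni" "x = u + fm + fp"
    "z = w + ii fm - ii fp"
    using adjoint_decomposition[OF xz] .
  have "fm + Q fp = 0"
    using \<open>Gamma0 S Q x = 0\<close> Gamma0_eq[OF _ parts(2,3), of u Q] parts(1,4)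
    by (simp add: Domain.DomainI)
  then have "fm = - Q fp"
    by (simp add: eq_neg_iff_add_eq_0)
  then show ?thesis
    using that[OF parts(1,3)] parts(4,5) by simp
qed

lemma S_subset_AQ: "S \<subseteq> AQ"
  using AQ_mem[OF _ defect_zero] by (auto simp: Q_zero)

lemma AQ_subset_adjoint: "AQ \<subseteq> adjoint_op S"
  by (auto simp: Gamma0_extension_def)

lemma is_operator_AQ: "is_operator AQ"
proof -
  have "(x + x', z + z') \<in> AQ" if xz: "(x, z) \<in> AQ" and xz': "(x', z') \<in> AQ" for x z x' z'
  proof -
    obtain u w f where uw: "(u, w) \<in> S" and f: "f \<in> Ni" and "x = u - Q f + f"
      and "z = w - ii (Q f) - ii f"
      using AQ_cases[OF xz] .
    moreover obtain u' w' f' where uw': "(u', w') \<in> S" and f': "f' \<in> Ni"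
      and "x' = u' - Q f' + f'" and "z' = w' - ii (Q f') - ii f'"
      using AQ_cases[OF xz'] .
    ultimately have "x + x' = (u + u') - Q (f + f') + (f + f')"
      and "z + z' = (w + w') - ii (Q (f + f')) - ii (f + f')"
      by (simp_all add: Q_add ii_add)
    then show ?thesis
      using AQ_mem[OF operator_add[OF op uw uw'] defect_add[OF f f']] by simp
  qed
  moreover have "(scaleC c x, scaleC c z) \<in> AQ" if xz: "(x, z) \<in> AQ" for x z c
  proof -
    obtain u w f where "(u, w) \<in> S" "f \<in> Ni" "x = u - Q f + f" "z = w - ii (Q f) - ii f"
      using AQ_cases[OF xz] .
    then show ?thesis
      using AQ_mem[OF operator_scaleC[OF op] defect_scaleC, of u w f c c]
      by (simp add: Q_scaleC ii_scaleC scaleC_add_right scaleC_diff_right)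
  qed
  ultimately show ?thesis
    using operator_single_valued[OF op_adjoint] AQ_subset_adjoint S_subset_AQ operator_zero[OF op]
    unfolding is_operator_def by blast
qed

lemma AQ_symmetric: "AQ \<subseteq> adjoint_op AQ"
proof (clarsimp simp: adjoint_op_iff_inner[OF is_operator_AQ])
  fix x z y y'
  assume "(x, z) \<in> AQ" "(y, y') \<in> AQ"
  then obtain u w f u' w' f' where S: "(u, w) \<in> S" "(u', w') \<in> S" and f: "f \<in> Ni" "f' \<in> Ni"
    and "x = u - Q f + f" "z = w - ii (Q f) - ii f" "y = u' - Q f' + f'" "y' = w' - ii (Q f') - ii f'"
    by (metis AQ_cases)
  moreover have "- Q f \<in> Nmi" "- Q f' \<in> Nmi"
    using defect_scaleR[OF Q_mem, of _ "-1"] f by auto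
  moreover have "inner (ii (Q f')) (Q f) = inner (ii f') f"
    using Q_inner[OF defect_ii[OF f(2)] f(1)] by (simp add: Q_ii[OF f(2)])
  ultimately show "inner y' x = inner y z"
    using boundary_form[OF S(2,1) _ _ f(2,1), of "- Q f'" "- Q f"] by simp
qed

lemma adjoint_AQ_subset: "adjoint_op AQ \<subseteq> AQ"
proof clarify
  fix y z
  assume yz: "(y, z) \<in> adjoint_op AQ"
  then have yz_S: "(y, z) \<in> adjoint_op S"
    using adjoint_op_antimono[OF S_subset_AQ] by blast
  obtain u w fm fp where uw: "(u, w) \<in> S" and fm: "fm \<in> Nmi" and fp: "fp \<in> Ni"
    and y: "y = u + fm + fp" and z: "z = w + ii fm - ii fp"
    using adjoint_decomposition[OF yz_S] .
  \<comment> \<open>Pairing with the elements of AQ built from \<open>f \<in> N_i\<close> shows that \<open>Gamma0 S Q y = fm + Q fp\<close>,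
    which lies in \<open>N_{-i} = i Q(N_i)\<close>, is orthogonal to \<open>i Q(N_i)\<close>.\<close>
  have orth: "inner (ii (Q f)) (fm + Q fp) = 0" if f: "f \<in> Ni" for f
  proof -
    have "inner (0 - ii (Q f) - ii f) y = inner (0 - Q f + f) z"
      using adjoint_opD[OF is_operator_AQ yz AQ_mem[OF operator_zero[OF op] f]] .
    moreover have "- Q f \<in> Nmi"
      using defect_minus[OF Q_mem[OF f]] .
    moreover have "inner (ii f) fp = inner (ii (Q f)) (Q fp)"
      using Q_inner[OF defect_ii[OF f] fp] by (simp add: Q_ii[OF f])
    ultimately show ?thesis
      using boundary_form[OF operator_zero[OF op] uw _ fm f fp, of "- Q f"] y z
      by (simp add: inner_add_right)
  qed
  obtain h where h: "h \<in> Ni" "Q h = fm + Q fp"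
    using Q_image defect_add[OF fm Q_mem[OF fp]] by (metis imageE)
  have "ii (Q (- ii h)) = Q h"
    using Q_scaleC[OF defect_ii[OF h(1)], of "-1"] Q_ii[OF h(1)]
    by (simp add: ii_ii)
  then have "fm + Q fp = 0"
    using orth[of "- ii h"] h defect_minus[OF defect_ii[OF h(1)]] by simp
  then have "Gamma0 S Q y = 0"
    using Gamma0_eq[OF _ fm fp, of u Q] uw y by (simp add: Domain.DomainI)
  then show "(y, z) \<in> AQ"
    using yz_S by (simp add: Gamma0_extension_def)
qed

lemma self_adjoint_AQ: "self_adjoint_op AQ"
proof -
  have "densely_defined AQ"
    using dense closure_mono[of "Domain S" "Domain AQ"] S_subset_AQ
    by (auto simp: densely_defined_def)
  then show ?thesis
    using is_operator_AQ AQ_symmetric adjoint_AQ_subset by (simp add: self_adjoint_op_def)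
qed

end

section \<open>The unitary determined by a self-adjoint extension\<close>

definition extension_unitary :: "('a::complex_hilbert \<times> 'a) set \<Rightarrow> ('a \<times> 'a) set \<Rightarrow> 'a \<Rightarrow> 'a"
  where "extension_unitary S A f = (THE g. g \<in> defect S (- \<i>) \<and> f - g \<in> Domain A)"

locale self_adjoint_extension = closed_symmetric S for S :: "('a::complex_hilbert \<times> 'a) set" +
  fixes A :: "('a \<times> 'a) set"
  assumes self_adjoint: "self_adjoint_op A" and extends: "S \<subseteq> A"
begin

abbreviation "QA \<equiv> extension_unitary S A"

lemma op_A: "is_operator A"
  using self_adjoint by (simp add: self_adjoint_op_def)

lemma A_eq_adjoint: "A = adjoint_op A"
  using self_adjoint by (simp add: self_adjoint_op_def)

lemma A_subset_adjoint: "A \<subseteq> adjoint_op S"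
  using adjoint_op_antimono[OF extends] A_eq_adjoint by simp

lemma domain_defect_eq_0:
  assumes c: "c \<in> {\<i>, - \<i>}" and "f \<in> Domain A" "f \<in> defect S c"
  shows "f = 0"
proof -
  obtain z where "(f, z) \<in> A"
    using assms(2) by blast
  moreover have "(f, scaleC (cnj c) f) \<in> adjoint_op S"
    using assms(3) defect_iff_adjoint by blast
  ultimately have "(f, scaleC (cnj c) f) \<in> A"
    using operator_single_valued[OF op_adjoint] A_subset_adjoint by blast
  moreover have "Im (cnj c) \<noteq> 0"
    using c by auto
  ultimately show ?thesis
    using symmetric_nonreal_eigenvector_eq_0[OF op_A] A_eq_adjoint by blast
qed

lemma defect_complement_in_domain:
  assumes c: "c \<in> {\<i>, - \<i>}" and f: "f \<in> defect S c"
  obtains g where "g \<in> defect S (- c)" "f + g \<in> Domain A"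
proof -
  have "(- 2) *\<^sub>R scaleC c f \<in> range_shift A c"
    using self_adjoint_range_shift[OF self_adjoint c] by simp
  then obtain x w where xw: "(x, w) \<in> A" and eq: "(- 2) *\<^sub>R scaleC c f = w - scaleC c x"
    unfolding range_shift_def by blast
  obtain u w0 h k where uw0: "(u, w0) \<in> S" and h: "h \<in> defect S c" and k: "k \<in> defect S (- c)"
    and x: "x = u + h + k" and w: "w = w0 - scaleC c h + scaleC c k"
    using adjoint_decomposition_defects[OF c] xw A_subset_adjoint by blast
  have "(w0 - scaleC c u) + 2 *\<^sub>R scaleC c (f - h) = (w - scaleC c x) + 2 *\<^sub>R scaleC c f"
    unfolding x w by (simp add: scaleC_add_right scaleC_diff_right algebra_simps scaleR_2)
  then have "(w0 - scaleC c u) + 2 *\<^sub>R scaleC c (f - h) = 0"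
    using eq by (simp add: eq_neg_iff_add_eq_0 flip: eq)
  then have "u = 0" "2 *\<^sub>R scaleC c (f - h) = 0"
    using symmetric_range_shift_defect_eq_0[OF op sym c uw0 defect_scaleR[OF defect_scaleC[OF defect_diff[OF f h]]]]
    by blast+
  then have "x = f + k"
    using c x by (auto simp: scaleC_eq_0_iff)
  then show ?thesis
    using that k xw by blast
qed

lemma extension_unitary_graph_unique:
  assumes "g \<in> Nmi" "g' \<in> Nmi" "f - g \<in> Domain A" "f - g' \<in> Domain A"
  shows "g = g'"
proof -
  have "g' - g \<in> Domain A"
    using operator_diff[OF op_A] assms(3,4) by fastforce
  then have "g' - g = 0"
    using domain_defect_eq_0[of "- \<i>" "g' - g"] defect_diff[OF assms(2,1)] by blast
  then show ?thesis
    by simp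
qed

lemma extension_unitary_graph:
  assumes f: "f \<in> Ni"
  shows "QA f \<in> Nmi" "f - QA f \<in> Domain A"
proof -
  obtain g where "g \<in> Nmi" "f + g \<in> Domain A"
    using defect_complement_in_domain[of \<i> f] f by auto
  then have witness: "- g \<in> Nmi \<and> f - (- g) \<in> Domain A"
    using defect_minus[of g S "- \<i>"] by simp
  then have "QA f \<in> Nmi \<and> f - QA f \<in> Domain A"
    unfolding extension_unitary_def
    by (rule theI) (metis witness extension_unitary_graph_unique)
  then show "QA f \<in> Nmi" "f - QA f \<in> Domain A"
    by simp_all
qed

lemma extension_unitary_eqI: "f \<in> Ni \<Longrightarrow> g \<in> Nmi \<Longrightarrow> f - g \<in> Domain A \<Longrightarrow> QA f = g"
  using extension_unitary_graph extension_unitary_graph_unique by blast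

lemma extension_unitary_linear:
  assumes x: "x \<in> Ni" and y: "y \<in> Ni"
  shows "QA (scaleC a x + scaleC b y) = scaleC a (QA x) + scaleC b (QA y)"
proof (rule extension_unitary_eqI)
  show "scaleC a x + scaleC b y \<in> Ni" "scaleC a (QA x) + scaleC b (QA y) \<in> Nmi"
    using extension_unitary_graph x y by (simp_all add: defect_add defect_scaleC)
  obtain z z' where "(x - QA x, z) \<in> A" "(y - QA y, z') \<in> A"
    using extension_unitary_graph(2) x y by blast
  then have "scaleC a (x - QA x) + scaleC b (y - QA y) \<in> Domain A"
    using operator_add[OF op_A operator_scaleC[OF op_A] operator_scaleC[OF op_A]] by blast
  then show "scaleC a x + scaleC b y - (scaleC a (QA x) + scaleC b (QA y)) \<in> Domain A"
    by (simp add: scaleC_diff_right algebra_simps)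
qed

lemma extension_unitary_norm:
  assumes f: "f \<in> Ni"
  shows "norm (QA f) = norm f"
proof -
  obtain z where fz: "(f - QA f, z) \<in> A"
    using extension_unitary_graph(2)[OF f] by blast
  have "- QA f \<in> Nmi"
    using defect_minus[OF extension_unitary_graph(1)[OF f]] .
  from adjoint_decomposed[OF operator_zero[OF op] this f]
  have "(f - QA f, - ii (QA f) - ii f) \<in> adjoint_op S"
    by (simp add: algebra_simps)
  then have "z = - ii (QA f) - ii f"
    using fz A_subset_adjoint operator_single_valued[OF op_adjoint] by blast
  then have "inner (- ii (QA f) - ii f) (ii f - ii (QA f)) = 0"
    using symmetric_inner_ii[OF op_A _ fz] A_eq_adjoint by (simp add: ii_diff)
  then have "inner (QA f) (QA f) = inner f f"
    by (simp add: inner_diff_left inner_diff_right inner_commute inner_ii_ii)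
  then show ?thesis
    by (simp add: norm_eq_sqrt_inner)
qed

lemma extension_unitary_inner:
  assumes x: "x \<in> Ni" and y: "y \<in> Ni"
  shows "inner (QA x) (QA y) = inner x y"
proof -
  have polarization: "inner a b = (norm (a + b)^2 - norm (a - b)^2) / 4" for a b :: 'a
    by (simp add: power2_norm_eq_inner inner_add_left inner_add_right inner_diff_left
        inner_diff_right inner_commute)
  have "QA (x + y) = QA x + QA y" "QA (x - y) = QA x - QA y"
    using extension_unitary_linear[OF x y, of 1 1] extension_unitary_linear[OF x y, of 1 "-1"]
    by simp_all
  then show ?thesis
    using extension_unitary_norm[OF defect_add[OF x y]] extension_unitary_norm[OF defect_diff[OF x y]]
    by (simp add: polarization[of "QA x"] polarization[of x])
qed

lemma unitary_extension_unitary: "unitary_between QA Ni Nmi"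
proof -
  have "g \<in> QA ` Ni" if g: "g \<in> Nmi" for g
  proof -
    obtain f where "f \<in> Ni" "- g + f \<in> Domain A"
      using defect_complement_in_domain[of "- \<i>" "- g"] defect_minus[OF g] by auto
    then show ?thesis
      using extension_unitary_eqI[OF _ g] by (metis add.commute diff_conv_add_uminus image_eqI)
  qed
  then have "QA ` Ni = Nmi"
    using extension_unitary_graph(1) by blast
  moreover have "cinner (QA x) (QA y) = cinner x y" if "x \<in> Ni" "y \<in> Ni" for x y
    using extension_unitary_inner[OF that] extension_unitary_inner[OF that(1) defect_ii[OF that(2)]]
      extension_unitary_linear[OF that(2) that(2), of \<i> 0]
    by (simp add: cinner_def scaleC_i)
  ultimately show ?thesis
    using extension_unitary_linear by (simp add: unitary_between_def)
qed

end

section \<open>Commutation with a fundamental symmetry\<close>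

context closed_symmetric_unitary
begin

lemma commutes_with_AQ:
  assumes J: "fundamental_symmetry J" "commutes_with J S"
    and Gamma0_J: "\<forall>\<psi>\<in>Domain (adjoint_op S). Gamma0 S Q (J \<psi>) = J (Gamma0 S Q \<psi>)"
  shows "commutes_with J AQ"
proof -
  have "(J x, J z) \<in> AQ" if "(x, z) \<in> AQ" for x z
  proof -
    have xz: "(x, z) \<in> adjoint_op S" and "Gamma0 S Q x = 0"
      using that by (auto simp: Gamma0_extension_def)
    then have "Gamma0 S Q (J x) = 0"
      using Gamma0_J linear_0[OF fundamental_symmetry_linear[OF J(1)]] by (metis Domain.DomainI)
    moreover have "(J x, J z) \<in> adjoint_op S"
      using commutes_with_adjoint_op[OF J] xz by (auto simp: commutes_with_def)
    ultimately show ?thesis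
      by (simp add: Gamma0_extension_def)
  qed
  then show ?thesis
    by (auto simp: commutes_with_def)
qed

end

context self_adjoint_extension
begin

lemma extension_unitary_commutes:
  assumes J: "fundamental_symmetry J" "commutes_with J S" "commutes_with J A" and f: "f \<in> Ni"
  shows "QA (J f) = J (QA f)"
proof (rule extension_unitary_eqI)
  show "J f \<in> Ni" "J (QA f) \<in> Nmi"
    using commutes_with_defect[OF J(1,2)] f extension_unitary_graph(1) by blast+
  have "J (f - QA f) \<in> Domain A"
    using commutes_with_Domain[OF J(3) extension_unitary_graph(2)[OF f]] .
  then show "J f - J (QA f) \<in> Domain A"
    by (simp add: linear_diff[OF fundamental_symmetry_linear[OF J(1)]])
qed

end

context closed_symmetric
begin

lemma Gamma_commute:
  assumes J: "fundamental_symmetry J" "commutes_with J S"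
    and QJ: "\<And>f. f \<in> Ni \<Longrightarrow> Q (J f) = J (Q f)" and \<psi>: "\<psi> \<in> Domain (adjoint_op S)"
  shows "Gamma0 S Q (J \<psi>) = J (Gamma0 S Q \<psi>) \<and> Gamma1 S Q (J \<psi>) = J (Gamma1 S Q \<psi>)"
proof -
  obtain u fm fp where parts: "u \<in> Domain S" "fm \<in> Nmi" "fp \<in> Ni" "\<psi> = u + fm + fp"
    using von_neumann_decomposition_exists[OF \<psi>] .
  have lin: "linear J"
    using fundamental_symmetry_linear[OF J(1)] .
  have "J \<psi> = J u + J fm + J fp"
    using parts(4) linear_add[OF lin] by simp
  moreover have "J u \<in> Domain S" "J fm \<in> Nmi" "J fp \<in> Ni"
    using parts commutes_with_Domain[OF J(2)] commutes_with_defect[OF J] by blast+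
  ultimately show ?thesis
    using parts J(1) QJ[OF parts(3)]
    by (simp add: Gamma0_eq Gamma1_eq linear_add[OF lin] linear_diff[OF lin] fundamental_symmetry_def)
qed

lemma commuting_extension_if_commuting_Gamma0:
  assumes J: "fundamental_symmetry J" "commutes_with J S" and Q: "unitary_between Q Ni Nmi"
    and Gamma0_J: "\<forall>\<psi>\<in>Domain (adjoint_op S). Gamma0 S Q (J \<psi>) = J (Gamma0 S Q \<psi>)"
  shows "\<exists>A. self_adjoint_op A \<and> S \<subseteq> A \<and> commutes_with J A"
proof -
  interpret closed_symmetric_unitary S Q
    using Q by unfold_locales
  show ?thesis
    using self_adjoint_AQ S_subset_AQ commutes_with_AQ[OF J Gamma0_J] by blast
qed

lemma commuting_Gamma_if_commuting_extension:
  assumes J: "fundamental_symmetry J" "commutes_with J S"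
    and A: "self_adjoint_op A" "S \<subseteq> A" "commutes_with J A"
  shows "\<exists>Q. unitary_between Q Ni Nmi \<and> (\<forall>\<psi>\<in>Domain (adjoint_op S).
    Gamma0 S Q (J \<psi>) = J (Gamma0 S Q \<psi>) \<and> Gamma1 S Q (J \<psi>) = J (Gamma1 S Q \<psi>))"
proof -
  interpret self_adjoint_extension S A
    using A by unfold_locales
  have "\<And>f. f \<in> Ni \<Longrightarrow> QA (J f) = J (QA f)"
    using extension_unitary_commutes[OF J A(3)] .
  then show ?thesis
    using unitary_extension_unitary Gamma_commute[OF J] by blast
qed

end

theorem proposition2p3:
  fixes S :: "('a::complex_hilbert \<times> 'a) set" and J :: "'a \<Rightarrow> 'a"
  assumes "is_operator S" and "closed S" and "densely_defined S" and "symmetric_op S"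
    and "equal_hilbert_dim (defect S \<i>) (defect S (- \<i>))"
    and "fundamental_symmetry J" and "commutes_with J S"
  shows "(\<exists>Q. unitary_between Q (defect S \<i>) (defect S (- \<i>))
            \<and> (\<forall>\<psi>\<in>Domain (adjoint_op S).
                 Gamma0 S Q (J \<psi>) = J (Gamma0 S Q \<psi>) \<and> Gamma1 S Q (J \<psi>) = J (Gamma1 S Q \<psi>)))
         \<longleftrightarrow> (\<exists>A. self_adjoint_op A \<and> S \<subseteq> A \<and> commutes_with J A)"
proof -
  interpret closed_symmetric S
    using assms(1-4) by unfold_locales (simp_all add: symmetric_op_def)
  show ?thesis
    using commuting_extension_if_commuting_Gamma0[OF assms(6,7)]
      commuting_Gamma_if_commuting_extension[OF assms(6,7)] by blast
qed

end
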